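(* $\Gamma_2(VP_3)/\Gamma_3(VP_3)\cong\mathbb{Z}^9$.
   Context: $VP_3$ is the group with generators $\lambda_{k,l}$, $1\le k\ne l\le 3$, and defining relations $\lambda_{k,i}\lambda_{k,j}\lambda_{i,j}=\lambda_{i,j}\lambda_{k,j}\lambda_{k,i}$ for all pairwise distinct $i,j,k\in\{1,2,3\}$. (Equivalently, it is the kernel of the homomorphism from the virtual braid group $VB_3$ to $S_3$ sending both $\sigma_i$ and $\rho_i$ to the transposition $(i\ i{+}1)$.) For a group $G$, $\Gamma_1(G)=G$, $\Gamma_i(G)=[\Gamma_{i-1}(G),G]$. *)

theory Defs
  imports "HOL-Algebra.Algebra"
begin

text \<open>A letter is a generator together with a sign (True = the generator, False = its inverse).\<close>

inductive pres_eq :: "'g set \<Rightarrow> (('g \<times> bool) list \<times> ('g \<times> bool) list) set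
    \<Rightarrow> ('g \<times> bool) list \<Rightarrow> ('g \<times> bool) list \<Rightarrow> bool"
  for S R where
  refl: "set w \<subseteq> S \<times> UNIV \<Longrightarrow> pres_eq S R w w"
| sym: "pres_eq S R w w' \<Longrightarrow> pres_eq S R w' w"
| trans: "pres_eq S R w1 w2 \<Longrightarrow> pres_eq S R w2 w3 \<Longrightarrow> pres_eq S R w1 w3"
| cancel: "set u \<subseteq> S \<times> UNIV \<Longrightarrow> set v \<subseteq> S \<times> UNIV \<Longrightarrow> a \<in> S \<Longrightarrow>
     pres_eq S R (u @ [(a, b), (a, \<not> b)] @ v) (u @ v)"
| rel: "(l, r) \<in> R \<Longrightarrow> set u \<subseteq> S \<times> UNIV \<Longrightarrow> set v \<subseteq> S \<times> UNIV \<Longrightarrow>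
     pres_eq S R (u @ l @ v) (u @ r @ v)"

definition presented_group :: "'g set \<Rightarrow> (('g \<times> bool) list \<times> ('g \<times> bool) list) set
    \<Rightarrow> ('g \<times> bool) list set monoid" where
  "presented_group S R =
     \<lparr>carrier = {Collect (pres_eq S R w) | w. set w \<subseteq> S \<times> UNIV},
      monoid.mult = (\<lambda>A B. {w. \<exists>a\<in>A. \<exists>b\<in>B. pres_eq S R (a @ b) w}),
      one = Collect (pres_eq S R [])\<rparr>"

text \<open>Generators lambda_{k,l}, 1 <= k /= l <= 3, encoded as the pair (k, l).\<close>

definition vp3_gens :: "(nat \<times> nat) set" where
  "vp3_gens = {(k, l). k \<in> {1, 2, 3} \<and> l \<in> {1, 2, 3} \<and> k \<noteq> l}"

definition vp3_rels :: "(((nat \<times> nat) \<times> bool) list \<times> ((nat \<times> nat) \<times> bool) list) set" where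
  "vp3_rels = {([((k, i), True), ((k, j), True), ((i, j), True)],
                [((i, j), True), ((k, j), True), ((k, i), True)]) | i j k.
               i \<in> {1, 2, 3} \<and> j \<in> {1, 2, 3} \<and> k \<in> {1, 2, 3} \<and>
               i \<noteq> j \<and> j \<noteq> k \<and> i \<noteq> k}"

definition VP3 :: "((nat \<times> nat) \<times> bool) list set monoid" where
  "VP3 = presented_group vp3_gens vp3_rels"

definition commutator_subgroup :: "('a, 'b) monoid_scheme \<Rightarrow> 'a set \<Rightarrow> 'a set \<Rightarrow> 'a set" where
  "commutator_subgroup G H K =
     generate G {x \<otimes>\<^bsub>G\<^esub> y \<otimes>\<^bsub>G\<^esub> inv\<^bsub>G\<^esub> x \<otimes>\<^bsub>G\<^esub> inv\<^bsub>G\<^esub> y | x y. x \<in> H \<and> y \<in> K}"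

text \<open>lower_central G i = Gamma_i(G) for i >= 1 (Gamma_1 = G, Gamma_i = [Gamma_{i-1}, G]);
  the value at 0 is set to G as a harmless convention.\<close>

fun lower_central :: "('a, 'b) monoid_scheme \<Rightarrow> nat \<Rightarrow> 'a set" where
  "lower_central G 0 = carrier G"
| "lower_central G (Suc 0) = carrier G"
| "lower_central G (Suc (Suc n)) = commutator_subgroup G (lower_central G (Suc n)) (carrier G)"

end

(* Modulo Gamma_3 the group VP_3 has nilpotency class two, so commutators are central and
   bilinear, and Gamma_2/Gamma_3 is generated by the fifteen commutators of pairs of generators.
   Each of the six defining relations lambda_ki lambda_kj lambda_ij = lambda_ij lambda_kj lambda_ki
   turns into [lambda_ki, lambda_kj] [lambda_ki, lambda_ij] [lambda_kj, lambda_ij] = 1 and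
   eliminates one of them, leaving nine basic commutators.  To see that these are independent,
   map VP_3 to the central extension Z^6 x Z^9 with product (a, z) (b, w) = (a + b, z + w + B a b)
   for a bilinear B chosen so that the defining relations hold there: the nine basic commutators
   go to the standard basis of Z^9.  The second coordinate of this map is a homomorphism from
   Gamma_2 onto Z^9 with kernel Gamma_3. *)

theory Submission
  imports Defs "HOL-Library.Function_Algebras"
begin

definition commutator :: "('a, 'b) monoid_scheme \<Rightarrow> 'a \<Rightarrow> 'a \<Rightarrow> 'a" where
  "commutator G x y = x \<otimes>\<^bsub>G\<^esub> y \<otimes>\<^bsub>G\<^esub> inv\<^bsub>G\<^esub> x \<otimes>\<^bsub>G\<^esub> inv\<^bsub>G\<^esub> y"

definition central :: "('a, 'b) monoid_scheme \<Rightarrow> 'a \<Rightarrow> bool" where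
  "central G a \<longleftrightarrow> a \<in> carrier G \<and> (\<forall>y\<in>carrier G. a \<otimes>\<^bsub>G\<^esub> y = y \<otimes>\<^bsub>G\<^esub> a)"

context group
begin

lemma inv_mult_cancel [simp]: "x \<in> carrier G \<Longrightarrow> y \<in> carrier G \<Longrightarrow> inv x \<otimes> (x \<otimes> y) = y"
  by (simp flip: m_assoc)

lemma mult_inv_cancel [simp]: "x \<in> carrier G \<Longrightarrow> y \<in> carrier G \<Longrightarrow> x \<otimes> (inv x \<otimes> y) = y"
  by (simp flip: m_assoc)

lemma commutator_closed [simp]:
  "x \<in> carrier G \<Longrightarrow> y \<in> carrier G \<Longrightarrow> commutator G x y \<in> carrier G"
  by (simp add: commutator_def)

lemma commutator_one_left [simp]: "y \<in> carrier G \<Longrightarrow> commutator G \<one> y = \<one>"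
  by (simp add: commutator_def)

lemma commutator_self [simp]: "x \<in> carrier G \<Longrightarrow> commutator G x x = \<one>"
  by (simp add: commutator_def m_assoc)

lemma inv_commutator:
  "x \<in> carrier G \<Longrightarrow> y \<in> carrier G \<Longrightarrow> inv (commutator G x y) = commutator G y x"
  by (simp add: commutator_def m_assoc inv_mult_group)

lemma conj_commutator:
  "g \<in> carrier G \<Longrightarrow> x \<in> carrier G \<Longrightarrow> y \<in> carrier G \<Longrightarrow>
   g \<otimes> commutator G x y \<otimes> inv g = commutator G (g \<otimes> x \<otimes> inv g) (g \<otimes> y \<otimes> inv g)"
  by (simp add: commutator_def m_assoc inv_mult_group)

lemma mult_eq_commutator_mult:
  "x \<in> carrier G \<Longrightarrow> y \<in> carrier G \<Longrightarrow> x \<otimes> y = commutator G x y \<otimes> (y \<otimes> x)"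
  by (simp add: commutator_def m_assoc)

lemma commutator_eq_one_iff:
  "x \<in> carrier G \<Longrightarrow> y \<in> carrier G \<Longrightarrow> commutator G x y = \<one> \<longleftrightarrow> x \<otimes> y = y \<otimes> x"
  by (metis mult_eq_commutator_mult l_one m_closed r_cancel_one' commutator_closed)

lemma commutator_mult_left_conj:
  "x \<in> carrier G \<Longrightarrow> x' \<in> carrier G \<Longrightarrow> y \<in> carrier G \<Longrightarrow>
   commutator G (x \<otimes> x') y = x \<otimes> commutator G x' y \<otimes> inv x \<otimes> commutator G x y"
  by (simp add: commutator_def m_assoc inv_mult_group)

lemma commutator_inv_left_conj:
  "x \<in> carrier G \<Longrightarrow> y \<in> carrier G \<Longrightarrow>
   commutator G (inv x) y = inv x \<otimes> inv (commutator G x y) \<otimes> x"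
  by (simp add: commutator_def m_assoc inv_mult_group)

lemma commutator_mem_normal:
  assumes "N \<lhd> G" "x \<in> N" "y \<in> carrier G"
  shows "commutator G x y \<in> N"
proof -
  interpret N: normal N G by (rule assms(1))
  have "y \<otimes> inv x \<otimes> inv y \<in> N" using assms by (simp add: N.inv_op_closed2)
  then have "x \<otimes> (y \<otimes> inv x \<otimes> inv y) \<in> N" using assms(2) by simp
  then show ?thesis using assms by (simp add: commutator_def m_assoc)
qed

lemma mem_subgroup_of_product_eq_one:
  assumes H: "subgroup H G" and abc: "a \<otimes> b \<otimes> c = \<one>" and "a \<in> H" "c \<in> H" "b \<in> carrier G"
  shows "b \<in> H"
proof -
  have a: "a \<in> carrier G" and c: "c \<in> carrier G" using assms subgroup.subset by blast+
  have "b = inv a \<otimes> (a \<otimes> b \<otimes> c) \<otimes> inv c" using a c assms(5) by (simp add: m_assoc)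
  then have "b = inv a \<otimes> inv c" using abc a c by simp
  then show ?thesis using assms subgroup.m_closed subgroup.m_inv_closed by metis
qed

lemma central_inv:
  assumes "central G a" shows "central G (inv a)"
  unfolding central_def
proof (intro conjI ballI)
  fix y assume y: "y \<in> carrier G"
  have a: "a \<in> carrier G" "a \<otimes> y = y \<otimes> a" using assms y by (auto simp: central_def)
  have "inv a \<otimes> y = inv a \<otimes> (y \<otimes> a) \<otimes> inv a" using a y by (simp add: m_assoc)
  also have "\<dots> = y \<otimes> inv a" using a y by (simp flip: a(2) add: m_assoc)
  finally show "inv a \<otimes> y = y \<otimes> inv a" .
qed (use assms in \<open>simp add: central_def\<close>)

lemma central_commute: "central G c \<Longrightarrow> y \<in> carrier G \<Longrightarrow> c \<otimes> y = y \<otimes> c"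
  by (simp add: central_def)

lemma central_conj: "central G c \<Longrightarrow> g \<in> carrier G \<Longrightarrow> g \<otimes> c \<otimes> inv g = c"
  unfolding central_def by (metis m_assoc r_inv r_one inv_closed)

lemma central_left_commute:
  "central G c \<Longrightarrow> y \<in> carrier G \<Longrightarrow> w \<in> carrier G \<Longrightarrow> y \<otimes> (c \<otimes> w) = c \<otimes> (y \<otimes> w)"
  unfolding central_def by (metis m_assoc)

lemma central_int_pow:
  assumes "central G a" shows "central G (a [^] (n::int))"
proof -
  have nat_pow: "central G (a [^] k)" for k :: nat
    using assms group_commutes_pow by (auto simp: central_def)
  show ?thesis
  proof (cases n rule: int_cases)
    case (nonneg k)
    then show ?thesis using nat_pow by (simp add: int_pow_int)
  next
    case (neg k)
    then show ?thesis
      using assms nat_pow[of "Suc k"] central_inv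
      by (simp add: central_def int_pow_neg_int del: of_nat_Suc)
  qed
qed

end

lemma (in group_hom) hom_commutator:
  "x \<in> carrier G \<Longrightarrow> y \<in> carrier G \<Longrightarrow> h (commutator G x y) = commutator H (h x) (h y)"
  by (simp add: commutator_def)

lemma lower_central_Suc_Suc:
  "lower_central G (Suc (Suc n)) =
     generate G {commutator G x y | x y. x \<in> lower_central G (Suc n) \<and> y \<in> carrier G}"
  by (simp add: commutator_subgroup_def commutator_def)

lemma lower_central_2:
  "lower_central G 2 = generate G {commutator G x y | x y. x \<in> carrier G \<and> y \<in> carrier G}"
  using lower_central_Suc_Suc[of G 0] by (simp add: numeral_2_eq_2)

lemma lower_central_3:
  "lower_central G 3 = generate G {commutator G x y | x y. x \<in> lower_central G 2 \<and> y \<in> carrier G}"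
  by (simp only: numeral_3_eq_3 numeral_2_eq_2 lower_central_Suc_Suc[of G "Suc 0"])

context group
begin

lemma lower_central_normal: "lower_central G n \<lhd> G"
proof -
  have "lower_central G (Suc m) \<lhd> G" for m
  proof (induction m)
    case (Suc m)
    let ?A = "{commutator G x y | x y. x \<in> lower_central G (Suc m) \<and> y \<in> carrier G}"
    interpret N: normal "lower_central G (Suc m)" G by (rule Suc.IH)
    show ?case unfolding lower_central_Suc_Suc
    proof (rule normal_generateI)
      show "?A \<subseteq> carrier G" using N.subset by auto
    next
      fix h g assume "h \<in> ?A" and g: "g \<in> carrier G"
      then obtain x y where xy: "h = commutator G x y" "x \<in> lower_central G (Suc m)" "y \<in> carrier G"
        by blast
      have "g \<otimes> x \<otimes> inv g \<in> lower_central G (Suc m)"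
        using xy(2) g by (simp add: N.inv_op_closed2)
      then show "g \<otimes> h \<otimes> inv g \<in> ?A"
        using xy g N.subset by (force simp: conj_commutator)
    qed
  qed (simp add: normal_self)
  then show ?thesis by (cases n) (simp_all add: normal_self)
qed

lemma lower_central_subset_carrier: "lower_central G n \<subseteq> carrier G"
  using lower_central_normal normal_imp_subgroup subgroup.subset by blast

lemma lower_central_subgroup: "subgroup (lower_central G n) G"
  using lower_central_normal normal_imp_subgroup by blast

lemma lower_central_Suc_subset: "lower_central G (Suc n) \<subseteq> lower_central G n"
proof (cases n)
  case (Suc m)
  have "{commutator G x y | x y. x \<in> lower_central G (Suc m) \<and> y \<in> carrier G} \<subseteq> lower_central G (Suc m)"
    using commutator_mem_normal[OF lower_central_normal] by blast
  then show ?thesis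
    unfolding Suc lower_central_Suc_Suc by (rule generate_subgroup_incl[OF _ lower_central_subgroup])
qed simp

end

lemma (in group_hom) lower_central_image: "h ` lower_central G n \<subseteq> lower_central H n"
proof -
  have "h ` lower_central G (Suc m) \<subseteq> lower_central H (Suc m)" for m
  proof (induction m)
    case (Suc m)
    let ?A = "{commutator G x y | x y. x \<in> lower_central G (Suc m) \<and> y \<in> carrier G}"
    let ?B = "{commutator H x y | x y. x \<in> lower_central H (Suc m) \<and> y \<in> carrier H}"
    have A: "?A \<subseteq> carrier G" using G.lower_central_subset_carrier by (blast intro: G.commutator_closed)
    have "h ` ?A \<subseteq> ?B"
      using Suc.IH G.lower_central_subset_carrier by (fastforce simp: hom_commutator)
    then show ?case
      unfolding lower_central_Suc_Suc generate_img[OF A, symmetric] by (rule H.mono_generate)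
  qed (simp add: image_subsetI)
  from this[of 0] this show ?thesis by (cases n) simp_all
qed

section \<open>Groups of nilpotency class at most two\<close>

locale two_step_nilpotent = group +
  assumes commutator_commutator [simp]:
    "a \<in> carrier G \<Longrightarrow> b \<in> carrier G \<Longrightarrow> c \<in> carrier G \<Longrightarrow>
     commutator G (commutator G a b) c = \<one>"
begin

lemma central_commutator:
  "a \<in> carrier G \<Longrightarrow> b \<in> carrier G \<Longrightarrow> central G (commutator G a b)"
  by (auto simp: central_def simp flip: commutator_eq_one_iff)

lemma commutator_mult_left:
  assumes "x \<in> carrier G" "x' \<in> carrier G" "y \<in> carrier G"
  shows "commutator G (x \<otimes> x') y = commutator G x y \<otimes> commutator G x' y"
proof -
  have "commutator G (x \<otimes> x') y = x \<otimes> commutator G x' y \<otimes> inv x \<otimes> commutator G x y"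
    using assms by (rule commutator_mult_left_conj)
  also have "\<dots> = commutator G x' y \<otimes> commutator G x y"
    using assms by (simp only: central_conj central_commutator)
  also have "\<dots> = commutator G x y \<otimes> commutator G x' y"
    using assms by (intro central_commute central_commutator commutator_closed)
  finally show ?thesis .
qed

lemma commutator_inv_left:
  assumes "x \<in> carrier G" "y \<in> carrier G"
  shows "commutator G (inv x) y = inv (commutator G x y)"
proof -
  have "central G (inv (commutator G x y))"
    using assms by (simp add: central_commutator central_inv)
  then show ?thesis
    using assms central_conj[of _ "inv x"] by (simp add: commutator_inv_left_conj)
qed

lemma commutator_product_eq_one:
  assumes x: "x \<in> carrier G" and y: "y \<in> carrier G" and z: "z \<in> carrier G"
    and rel: "x \<otimes> y \<otimes> z = z \<otimes> y \<otimes> x"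
  shows "commutator G x y \<otimes> commutator G x z \<otimes> commutator G y z = \<one>"
proof -
  note closed = m_closed commutator_closed
  have "x \<otimes> y \<otimes> z = commutator G x y \<otimes> (y \<otimes> x) \<otimes> z"
    using x y by (simp only: mult_eq_commutator_mult[of x y])
  also have "\<dots> = commutator G x y \<otimes> (y \<otimes> (commutator G x z \<otimes> (z \<otimes> x)))"
    using x y z by (simp only: m_assoc closed mult_eq_commutator_mult[of x z])
  also have "\<dots> = commutator G x y \<otimes> (commutator G x z \<otimes> ((y \<otimes> z) \<otimes> x))"
    using x y z by (simp only: central_left_commute[OF central_commutator[OF x z]] m_assoc closed)
  also have "\<dots> = commutator G x y \<otimes> commutator G x z \<otimes> commutator G y z \<otimes> (z \<otimes> y \<otimes> x)"
    using x y z by (simp only: mult_eq_commutator_mult[of y z] m_assoc closed)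
  finally have "commutator G x y \<otimes> commutator G x z \<otimes> commutator G y z \<otimes> (z \<otimes> y \<otimes> x) = z \<otimes> y \<otimes> x"
    by (simp only: rel)
  then show ?thesis
    using x y z by (simp only: r_cancel_one closed)
qed

lemma commutator_left_mem_subgroup_generate:
  assumes T: "subgroup T G" and S: "S \<subseteq> carrier G"
    and v: "v \<in> generate G S" and t: "t \<in> carrier G"
    and St: "\<And>s. s \<in> S \<Longrightarrow> commutator G s t \<in> T"
  shows "commutator G v t \<in> T"
  using v
proof induction
  case one
  then show ?case using t subgroup.one_closed[OF T] by simp
next
  case (incl h)
  then show ?case by (rule St)
next
  case (inv h)
  have "commutator G (inv h) t = inv (commutator G h t)"
    using inv S t by (intro commutator_inv_left) auto
  then show ?case using inv St subgroup.m_inv_closed[OF T] by simp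
next
  case (eng h1 h2)
  have "commutator G (h1 \<otimes> h2) t = commutator G h1 t \<otimes> commutator G h2 t"
    using eng t generate_in_carrier[OF S] by (intro commutator_mult_left) auto
  then show ?case using eng subgroup.m_closed[OF T] by simp
qed

lemma commutator_mem_subgroup_generate:
  assumes T: "subgroup T G" and S: "S \<subseteq> carrier G"
    and ST: "\<And>s t. s \<in> S \<Longrightarrow> t \<in> S \<Longrightarrow> commutator G s t \<in> T"
    and u: "u \<in> generate G S" and w: "w \<in> generate G S"
  shows "commutator G u w \<in> T"
proof -
  have w_carrier: "w \<in> carrier G" using w generate_in_carrier[OF S] by blast
  have "commutator G s w \<in> T" if s: "s \<in> S" for s
  proof -
    have "commutator G w s \<in> T"
      using commutator_left_mem_subgroup_generate[OF T S w] ST s S by blast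
    then have "inv (commutator G w s) \<in> T"
      by (rule subgroup.m_inv_closed[OF T])
    then show ?thesis
      using s S w_carrier by (auto simp: inv_commutator)
  qed
  then show ?thesis
    using commutator_left_mem_subgroup_generate[OF T S u w_carrier] by blast
qed

lemma lower_central_2_subset:
  assumes "subgroup T G" "S \<subseteq> carrier G" "carrier G = generate G S"
    and "\<And>s t. s \<in> S \<Longrightarrow> t \<in> S \<Longrightarrow> commutator G s t \<in> T"
  shows "lower_central G 2 \<subseteq> T"
  unfolding lower_central_2
  using commutator_mem_subgroup_generate[OF assms(1,2,4)] assms(3)
  by (intro generate_subgroup_incl[OF _ assms(1)]) auto

end

lemma (in group) two_step_nilpotent_quotient: "two_step_nilpotent (G Mod lower_central G 3)"
proof -
  interpret N: normal "lower_central G 3" G by (rule lower_central_normal)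
  interpret P: group_hom G "G Mod lower_central G 3" "\<lambda>a. lower_central G 3 #> a"
    by (simp add: group_hom_def group_hom_axioms_def is_group N.factorgroup_is_group N.r_coset_hom_Mod)
  show ?thesis
  proof (intro two_step_nilpotent.intro two_step_nilpotent_axioms.intro)
    show "group (G Mod lower_central G 3)" by (rule N.factorgroup_is_group)
  next
    fix U V W assume "U \<in> carrier (G Mod lower_central G 3)" "V \<in> carrier (G Mod lower_central G 3)"
      "W \<in> carrier (G Mod lower_central G 3)"
    then obtain a b c where abc: "a \<in> carrier G" "b \<in> carrier G" "c \<in> carrier G"
      "U = lower_central G 3 #> a" "V = lower_central G 3 #> b" "W = lower_central G 3 #> c"
      by (auto simp: carrier_FactGroup)
    have "commutator G a b \<in> lower_central G 2"
      unfolding lower_central_2 using abc by (intro generate.incl) blast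
    then have "commutator G (commutator G a b) c \<in> lower_central G 3"
      unfolding lower_central_3 using abc by (intro generate.incl) blast
    then have "lower_central G 3 #> commutator G (commutator G a b) c = \<one>\<^bsub>G Mod lower_central G 3\<^esub>"
      by (simp add: N.rcos_const)
    moreover have "lower_central G 3 #> commutator G (commutator G a b) c
        = commutator (G Mod lower_central G 3) (commutator (G Mod lower_central G 3) U V) W"
      using abc by (simp only: P.hom_commutator commutator_closed)
    ultimately show "commutator (G Mod lower_central G 3) (commutator (G Mod lower_central G 3) U V) W
               = \<one>\<^bsub>G Mod lower_central G 3\<^esub>"
      by metis
  qed
qed

definition basis_vec :: "'i \<Rightarrow> 'i \<Rightarrow> int" where
  "basis_vec i = (\<lambda>j. if j = i then 1 else 0)"

definition pow_prod :: "('a, 'b) monoid_scheme \<Rightarrow> 'i list \<Rightarrow> ('i \<Rightarrow> 'a) \<Rightarrow> ('i \<Rightarrow> int) \<Rightarrow> 'a" where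
  "pow_prod G l f z = foldr (\<lambda>i acc. f i [^]\<^bsub>G\<^esub> z i \<otimes>\<^bsub>G\<^esub> acc) l \<one>\<^bsub>G\<^esub>"

lemma pow_prod_Nil [simp]: "pow_prod G [] f z = \<one>\<^bsub>G\<^esub>"
  by (simp add: pow_prod_def)

lemma pow_prod_Cons [simp]: "pow_prod G (i # l) f z = f i [^]\<^bsub>G\<^esub> z i \<otimes>\<^bsub>G\<^esub> pow_prod G l f z"
  by (simp add: pow_prod_def)

lemma pow_prod_cong:
  "(\<And>i. i \<in> set l \<Longrightarrow> f i = g i) \<Longrightarrow> pow_prod G l f z = pow_prod G l g z"
  by (induction l) auto

context group
begin

lemma pow_prod_mem_subgroup:
  "subgroup H G \<Longrightarrow> (\<And>i. i \<in> set l \<Longrightarrow> f i \<in> H) \<Longrightarrow> pow_prod G l f z \<in> H"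
  by (induction l) (auto intro: subgroup.m_closed subgroup.one_closed subgroup_int_pow_closed)

lemma pow_prod_closed [simp]:
  "(\<And>i. i \<in> set l \<Longrightarrow> f i \<in> carrier G) \<Longrightarrow> pow_prod G l f z \<in> carrier G"
  using pow_prod_mem_subgroup[OF subgroup_self] .

lemma pow_prod_zero: "(\<And>i. i \<in> set l \<Longrightarrow> z i = 0) \<Longrightarrow> pow_prod G l f z = \<one>"
  by (induction l) auto

lemma pow_prod_add:
  assumes "\<And>i. i \<in> set l \<Longrightarrow> central G (f i)"
  shows "pow_prod G l f (\<lambda>i. z i + w i) = pow_prod G l f z \<otimes> pow_prod G l f w"
  using assms
proof (induction l)
  case (Cons i l)
  have fi: "f i \<in> carrier G" "central G (f i [^] w i)"
    using Cons.prems central_int_pow by (auto simp: central_def)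
  have rest: "pow_prod G l f z \<in> carrier G" "pow_prod G l f w \<in> carrier G"
    using Cons.prems by (auto simp: central_def)
  have "pow_prod G (i # l) f (\<lambda>i. z i + w i) = f i [^] z i \<otimes> (f i [^] w i \<otimes> (pow_prod G l f z \<otimes> pow_prod G l f w))"
    using Cons fi rest by (simp add: int_pow_mult m_assoc)
  also have "\<dots> = pow_prod G (i # l) f z \<otimes> pow_prod G (i # l) f w"
    using fi rest by (simp add: central_left_commute[OF fi(2)] m_assoc)
  finally show ?case .
qed simp

lemma pow_prod_uminus:
  assumes "\<And>i. i \<in> set l \<Longrightarrow> central G (f i)"
  shows "pow_prod G l f (\<lambda>i. - z i) = inv (pow_prod G l f z)"
proof -
  have closed: "\<And>i. i \<in> set l \<Longrightarrow> f i \<in> carrier G" using assms by (simp add: central_def)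
  have "pow_prod G l f (\<lambda>i. - z i) \<otimes> pow_prod G l f z = pow_prod G l f (\<lambda>i. - z i + z i)"
    using assms by (simp only: pow_prod_add)
  also have "\<dots> = \<one>" by (simp add: pow_prod_zero)
  finally show ?thesis
    using closed by (intro inv_equality[symmetric]) auto
qed

lemma pow_prod_basis_vec:
  assumes "distinct l" "i \<in> set l" "\<And>j. j \<in> set l \<Longrightarrow> f j \<in> carrier G"
  shows "pow_prod G l f (basis_vec i) = f i"
  using assms
proof (induction l)
  case (Cons k l)
  show ?case
  proof (cases "k = i")
    case True
    then have "pow_prod G l f (basis_vec i) = \<one>"
      using Cons.prems(1) by (intro pow_prod_zero) (auto simp: basis_vec_def)
    then show ?thesis using True Cons.prems by (simp add: basis_vec_def)
  next
    case False
    then show ?thesis using Cons by (simp add: basis_vec_def)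
  qed
qed simp

lemma generate_central_subset_range_pow_prod:
  assumes l: "distinct l" and central: "\<And>i. i \<in> set l \<Longrightarrow> central G (f i)"
  shows "generate G (f ` set l) \<subseteq> range (pow_prod G l f)"
proof
  have closed: "\<And>i. i \<in> set l \<Longrightarrow> f i \<in> carrier G" using central by (simp add: central_def)
  fix x assume "x \<in> generate G (f ` set l)"
  then show "x \<in> range (pow_prod G l f)"
  proof induction
    case one
    have "\<one> = pow_prod G l f (\<lambda>_. 0)" by (simp add: pow_prod_zero)
    then show ?case by blast
  next
    case (incl h)
    then obtain i where "i \<in> set l" "h = f i" by blast
    then have "h = pow_prod G l f (basis_vec i)" using l closed by (simp add: pow_prod_basis_vec)
    then show ?case by blast
  next
    case (inv h)
    then obtain i where "i \<in> set l" "h = f i" by blast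
    then have "inv h = pow_prod G l f (\<lambda>j. - basis_vec i j)"
      using l closed central by (simp add: pow_prod_basis_vec pow_prod_uminus)
    then show ?case by blast
  next
    case (eng h1 h2)
    then obtain z w where "h1 = pow_prod G l f z" "h2 = pow_prod G l f w" by blast
    then have "h1 \<otimes> h2 = pow_prod G l f (\<lambda>i. z i + w i)" using central by (simp add: pow_prod_add)
    then show ?case by blast
  qed
qed

end

lemma (in group_hom) hom_pow_prod:
  "(\<And>i. i \<in> set l \<Longrightarrow> f i \<in> carrier G) \<Longrightarrow> h (pow_prod G l f z) = pow_prod H l (h \<circ> f) z"
  by (induction l) (auto simp: hom_int_pow)

definition eval_word :: "('c, 'd) monoid_scheme \<Rightarrow> ('g \<Rightarrow> 'c) \<Rightarrow> ('g \<times> bool) list \<Rightarrow> 'c" where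
  "eval_word H f w = foldr (\<lambda>(s, b) acc. (if b then f s else inv\<^bsub>H\<^esub> (f s)) \<otimes>\<^bsub>H\<^esub> acc) w \<one>\<^bsub>H\<^esub>"

lemma eval_word_Nil [simp]: "eval_word H f [] = \<one>\<^bsub>H\<^esub>"
  by (simp add: eval_word_def)

lemma eval_word_Cons [simp]:
  "eval_word H f ((s, b) # w) = (if b then f s else inv\<^bsub>H\<^esub> (f s)) \<otimes>\<^bsub>H\<^esub> eval_word H f w"
  by (simp add: eval_word_def)

lemma (in group) eval_word_closed [simp]:
  "f \<in> S \<rightarrow> carrier G \<Longrightarrow> set w \<subseteq> S \<times> UNIV \<Longrightarrow> eval_word G f w \<in> carrier G"
  by (induction w) (auto simp: Pi_iff)

lemma (in group) eval_word_append:
  "f \<in> S \<rightarrow> carrier G \<Longrightarrow> set u \<subseteq> S \<times> UNIV \<Longrightarrow> set v \<subseteq> S \<times> UNIV \<Longrightarrow>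
   eval_word G f (u @ v) = eval_word G f u \<otimes> eval_word G f v"
  by (induction u) (auto simp: m_assoc Pi_iff)

locale group_presentation =
  fixes S :: "'g set" and R :: "(('g \<times> bool) list \<times> ('g \<times> bool) list) set"
  assumes relators_words: "(l, r) \<in> R \<Longrightarrow> set l \<subseteq> S \<times> UNIV \<and> set r \<subseteq> S \<times> UNIV"
begin

abbreviation word :: "('g \<times> bool) list \<Rightarrow> bool" where
  "word w \<equiv> set w \<subseteq> S \<times> UNIV"

definition word_class :: "('g \<times> bool) list \<Rightarrow> ('g \<times> bool) list set" where
  "word_class w = Collect (pres_eq S R w)"

lemma pres_eq_words: "pres_eq S R w w' \<Longrightarrow> word w \<and> word w'"
  by (induction rule: pres_eq.induct) (auto dest: relators_words)

lemma pres_eq_append_cong: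
  "pres_eq S R w w' \<Longrightarrow> word u \<Longrightarrow> word v \<Longrightarrow> pres_eq S R (u @ w @ v) (u @ w' @ v)"
proof (induction arbitrary: u v rule: pres_eq.induct)
  case (refl w)
  then show ?case by (intro pres_eq.refl) auto
next
  case (sym w w')
  then show ?case by (blast intro: pres_eq.sym)
next
  case (trans w1 w2 w3)
  then show ?case by (blast intro: pres_eq.trans)
next
  case (cancel u' v' a b)
  have "pres_eq S R ((u @ u') @ [(a, b), (a, \<not> b)] @ (v' @ v)) ((u @ u') @ (v' @ v))"
    using cancel by (intro pres_eq.cancel) auto
  then show ?case by simp
next
  case (rel l r u' v')
  have "pres_eq S R ((u @ u') @ l @ (v' @ v)) ((u @ u') @ r @ (v' @ v))"
    using rel by (intro pres_eq.rel) auto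
  then show ?case by simp
qed

lemma pres_eq_append: "pres_eq S R a a' \<Longrightarrow> pres_eq S R b b' \<Longrightarrow> pres_eq S R (a @ b) (a' @ b')"
  using pres_eq_append_cong[of a a' "[]" b] pres_eq_append_cong[of b b' a' "[]"] pres_eq_words
  by (auto intro: pres_eq.trans)

lemma carrier_presented_group: "carrier (presented_group S R) = word_class ` {w. word w}"
  by (auto simp: presented_group_def word_class_def)

lemma word_class_closed: "word w \<Longrightarrow> word_class w \<in> carrier (presented_group S R)"
  by (simp add: carrier_presented_group)

lemma one_presented_group: "\<one>\<^bsub>presented_group S R\<^esub> = word_class []"
  by (simp add: presented_group_def word_class_def)

lemma word_class_eq_iff:
  assumes "word w" "word w'"
  shows "word_class w = word_class w' \<longleftrightarrow> pres_eq S R w w'"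
proof
  assume "word_class w = word_class w'"
  moreover have "w \<in> word_class w" using assms by (simp add: word_class_def pres_eq.refl)
  ultimately show "pres_eq S R w w'" by (simp add: word_class_def pres_eq.sym)
next
  assume "pres_eq S R w w'"
  then show "word_class w = word_class w'"
    unfolding word_class_def by (metis pres_eq.sym pres_eq.trans Collect_cong)
qed

lemma mult_word_class:
  assumes a: "word a" and b: "word b"
  shows "word_class a \<otimes>\<^bsub>presented_group S R\<^esub> word_class b = word_class (a @ b)"
proof -
  have "a \<in> word_class a" "b \<in> word_class b" using a b by (auto simp: word_class_def intro: pres_eq.refl)
  then have "{w. \<exists>a'\<in>word_class a. \<exists>b'\<in>word_class b. pres_eq S R (a' @ b') w} = word_class (a @ b)"
    unfolding word_class_def by (blast intro: pres_eq.trans pres_eq_append)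
  then show ?thesis by (simp add: presented_group_def word_class_def)
qed

lemma word_class_relator: "(l, r) \<in> R \<Longrightarrow> word_class l = word_class r"
  using pres_eq.rel[where u = "[]" and v = "[]"] relators_words by (simp add: word_class_eq_iff)

lemma pres_eq_inverse_word_cancel:
  "word w \<Longrightarrow> pres_eq S R (rev (map (\<lambda>(s, b). (s, \<not> b)) w) @ w) []"
proof (induction w)
  case Nil
  then show ?case by (auto intro: pres_eq.refl)
next
  case (Cons x w)
  obtain s b where x: "x = (s, b)" by fastforce
  let ?w' = "rev (map (\<lambda>(s, b). (s, \<not> b)) w)"
  have "pres_eq S R (?w' @ [(s, \<not> b), (s, \<not> \<not> b)] @ w) (?w' @ w)"
    using Cons x by (intro pres_eq.cancel) auto
  then show ?case using Cons x by (auto intro: pres_eq.trans)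
qed

lemma group_presented_group: "group (presented_group S R)"
proof (rule groupI)
  fix x y assume "x \<in> carrier (presented_group S R)" "y \<in> carrier (presented_group S R)"
  then show "x \<otimes>\<^bsub>presented_group S R\<^esub> y \<in> carrier (presented_group S R)"
    by (auto simp: carrier_presented_group mult_word_class)
next
  show "\<one>\<^bsub>presented_group S R\<^esub> \<in> carrier (presented_group S R)"
    by (auto simp: carrier_presented_group one_presented_group)
next
  fix x y z
  assume "x \<in> carrier (presented_group S R)" "y \<in> carrier (presented_group S R)"
    "z \<in> carrier (presented_group S R)"
  then show "x \<otimes>\<^bsub>presented_group S R\<^esub> y \<otimes>\<^bsub>presented_group S R\<^esub> z =
             x \<otimes>\<^bsub>presented_group S R\<^esub> (y \<otimes>\<^bsub>presented_group S R\<^esub> z)"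
    by (auto simp: carrier_presented_group mult_word_class)
next
  fix x assume "x \<in> carrier (presented_group S R)"
  then show "\<one>\<^bsub>presented_group S R\<^esub> \<otimes>\<^bsub>presented_group S R\<^esub> x = x"
    by (auto simp: carrier_presented_group mult_word_class one_presented_group)
next
  fix x assume "x \<in> carrier (presented_group S R)"
  then obtain w where w: "word w" "x = word_class w" by (auto simp: carrier_presented_group)
  let ?w' = "rev (map (\<lambda>(s, b). (s, \<not> b)) w)"
  have "word ?w'" using w by auto
  then show "\<exists>y\<in>carrier (presented_group S R). y \<otimes>\<^bsub>presented_group S R\<^esub> x = \<one>\<^bsub>presented_group S R\<^esub>"
    using w pres_eq_inverse_word_cancel
    by (intro bexI[of _ "word_class ?w'"])
       (auto simp: carrier_presented_group mult_word_class one_presented_group word_class_eq_iff)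
qed

lemma carrier_presented_group_generate:
  "carrier (presented_group S R) = generate (presented_group S R) ((\<lambda>s. word_class [(s, True)]) ` S)"
proof
  interpret P: group "presented_group S R" by (rule group_presented_group)
  let ?gens = "(\<lambda>s. word_class [(s, True)]) ` S"
  have "word_class w \<in> generate (presented_group S R) ?gens" if "word w" for w
    using that
  proof (induction w)
    case Nil
    then show ?case by (simp add: generate.one flip: one_presented_group)
  next
    case (Cons x w)
    obtain s b where x: "x = (s, b)" and s: "s \<in> S" using Cons.prems by fastforce
    have "word_class [(s, False)] \<otimes>\<^bsub>presented_group S R\<^esub> word_class [(s, True)] =
        \<one>\<^bsub>presented_group S R\<^esub>"
      using s pres_eq.cancel[where u = "[]" and v = "[]" and a = s and b = False]
      by (simp add: mult_word_class one_presented_group word_class_eq_iff)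
    then have "word_class [(s, False)] = inv\<^bsub>presented_group S R\<^esub> word_class [(s, True)]"
      using s by (simp add: P.inv_equality word_class_closed)
    then have "word_class [x] \<in> generate (presented_group S R) ?gens"
      using s x by (cases b) (auto intro: generate.incl generate.inv)
    moreover have "word_class (x # w) = word_class [x] \<otimes>\<^bsub>presented_group S R\<^esub> word_class w"
      using Cons.prems by (simp add: mult_word_class)
    ultimately show ?case using Cons by (auto intro: generate.eng)
  qed
  then show "carrier (presented_group S R) \<subseteq> generate (presented_group S R) ?gens"
    by (auto simp: carrier_presented_group)
  show "generate (presented_group S R) ?gens \<subseteq> carrier (presented_group S R)"
    by (rule P.generate_incl) (auto intro: word_class_closed)
qed

definition lift_hom :: "('c, 'd) monoid_scheme \<Rightarrow> ('g \<Rightarrow> 'c) \<Rightarrow> ('g \<times> bool) list set \<Rightarrow> 'c" where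
  "lift_hom H f U = eval_word H f (SOME w. w \<in> U)"

context
  fixes H :: "('c, 'd) monoid_scheme" and f :: "'g \<Rightarrow> 'c"
  assumes H: "group H" and f: "f \<in> S \<rightarrow> carrier H"
    and respects: "\<And>l r. (l, r) \<in> R \<Longrightarrow> eval_word H f l = eval_word H f r"
begin

lemma eval_word_pres_eq: "pres_eq S R w w' \<Longrightarrow> eval_word H f w = eval_word H f w'"
proof (induction rule: pres_eq.induct)
  case (cancel u v a b)
  interpret H: group H by (rule H)
  have "eval_word H f ([(a, b), (a, \<not> b)] @ v) = eval_word H f v"
    using cancel f by (auto simp: H.m_assoc[symmetric] Pi_iff)
  then show ?case
    using cancel f by (simp add: H.eval_word_append)
next
  case (rel l r u v)
  interpret H: group H by (rule H)
  show ?case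
    using rel f relators_words[OF rel(1)] by (simp add: H.eval_word_append respects)
qed auto

lemma lift_hom_word_class: "word w \<Longrightarrow> lift_hom H f (word_class w) = eval_word H f w"
proof -
  assume "word w"
  then have "w \<in> word_class w" by (simp add: word_class_def pres_eq.refl)
  then have "pres_eq S R w (SOME w'. w' \<in> word_class w)"
    by (metis (mono_tags) mem_Collect_eq someI word_class_def)
  then show ?thesis unfolding lift_hom_def by (metis eval_word_pres_eq)
qed

lemma lift_hom: "lift_hom H f \<in> hom (presented_group S R) H"
proof (rule homI)
  fix x assume "x \<in> carrier (presented_group S R)"
  then show "lift_hom H f x \<in> carrier H"
    using f by (auto simp: carrier_presented_group lift_hom_word_class group.eval_word_closed[OF H])
next
  fix x y assume "x \<in> carrier (presented_group S R)" "y \<in> carrier (presented_group S R)"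
  then show "lift_hom H f (x \<otimes>\<^bsub>presented_group S R\<^esub> y) = lift_hom H f x \<otimes>\<^bsub>H\<^esub> lift_hom H f y"
    using f by (auto simp: carrier_presented_group mult_word_class lift_hom_word_class
        group.eval_word_append[OF H])
qed

end

end

section \<open>Central extensions by biadditive cocycles\<close>

locale biadditive =
  fixes B :: "'a::ab_group_add \<Rightarrow> 'a \<Rightarrow> 'c::ab_group_add"
  assumes add_left: "B (a + a') b = B a b + B a' b"
    and add_right: "B a (b + b') = B a b + B a b'"
begin

lemma zero_left [simp]: "B 0 b = 0"
  using additive.zero[of "\<lambda>a. B a b"] add_left by (simp add: additive_def)

lemma zero_right [simp]: "B a 0 = 0"
  using additive.zero[of "B a"] add_right by (simp add: additive_def)

lemma minus_left: "B (- a) b = - B a b"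
  using additive.minus[of "\<lambda>a. B a b"] add_left by (simp add: additive_def)

lemma minus_right: "B a (- b) = - B a b"
  using additive.minus[of "B a"] add_right by (simp add: additive_def)

lemmas simps = add_left add_right minus_left minus_right

end

definition cocycle_group :: "('a::ab_group_add \<Rightarrow> 'a \<Rightarrow> 'c::ab_group_add) \<Rightarrow> ('a \<times> 'c) monoid" where
  "cocycle_group B =
     \<lparr>carrier = UNIV, monoid.mult = (\<lambda>(a, z) (b, w). (a + b, z + w + B a b)), one = (0, 0)\<rparr>"

lemma carrier_cocycle_group [simp]: "carrier (cocycle_group B) = UNIV"
  by (simp add: cocycle_group_def)

lemma mult_cocycle_group [simp]:
  "(a, z) \<otimes>\<^bsub>cocycle_group B\<^esub> (b, w) = (a + b, z + w + B a b)"
  by (simp add: cocycle_group_def)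

lemma one_cocycle_group [simp]: "\<one>\<^bsub>cocycle_group B\<^esub> = (0, 0)"
  by (simp add: cocycle_group_def)

context biadditive
begin

lemma group_cocycle_group: "group (cocycle_group B)"
proof (rule groupI)
  fix x y z :: "'a \<times> 'c"
  show "x \<otimes>\<^bsub>cocycle_group B\<^esub> y \<otimes>\<^bsub>cocycle_group B\<^esub> z =
        x \<otimes>\<^bsub>cocycle_group B\<^esub> (y \<otimes>\<^bsub>cocycle_group B\<^esub> z)"
    by (cases x, cases y, cases z) (simp add: simps ac_simps)
next
  fix x :: "'a \<times> 'c"
  show "\<one>\<^bsub>cocycle_group B\<^esub> \<otimes>\<^bsub>cocycle_group B\<^esub> x = x"
    by (cases x) simp
  obtain a z where x: "x = (a, z)" by fastforce
  show "\<exists>y\<in>carrier (cocycle_group B). y \<otimes>\<^bsub>cocycle_group B\<^esub> x = \<one>\<^bsub>cocycle_group B\<^esub>"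
    unfolding x by (intro bexI[of _ "(- a, - z + B a a)"]) (simp_all add: minus_left)
qed auto

interpretation N: group "cocycle_group B"
  by (rule group_cocycle_group)

lemma inv_cocycle_group: "inv\<^bsub>cocycle_group B\<^esub> (a, z) = (- a, - z + B a a)"
  by (rule N.inv_equality) (simp_all add: minus_left)

lemma commutator_cocycle_group:
  "commutator (cocycle_group B) x y = (0, B (fst x) (fst y) - B (fst y) (fst x))"
  by (cases x, cases y) (simp add: commutator_def inv_cocycle_group simps algebra_simps)

lemma lower_central_2_cocycle_group: "lower_central (cocycle_group B) 2 \<subseteq> {0} \<times> UNIV"
proof -
  have "subgroup ({0} \<times> UNIV) (cocycle_group B)"
    by (rule N.subgroupI) (auto simp: inv_cocycle_group)
  then show ?thesis
    unfolding lower_central_2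
    by (rule N.generate_subgroup_incl[rotated]) (auto simp: commutator_cocycle_group)
qed

lemma lower_central_3_cocycle_group: "lower_central (cocycle_group B) 3 = {(0, 0)}"
proof -
  have "lower_central (cocycle_group B) 3 \<subseteq> generate (cocycle_group B) {(0, 0)}"
    unfolding lower_central_3
    by (rule N.mono_generate) (use lower_central_2_cocycle_group in \<open>auto simp: commutator_cocycle_group\<close>)
  then show ?thesis
    using N.generate_one N.lower_central_subgroup[THEN subgroup.one_closed] by auto
qed

end

lemma int_pow_cocycle_group:
  fixes B :: "'a::ab_group_add \<Rightarrow> 'a \<Rightarrow> 'c::ring_1"
  assumes "biadditive B"
  shows "(0, z) [^]\<^bsub>cocycle_group B\<^esub> (n::int) = (0, of_int n * z)"
proof -
  interpret biadditive B by (rule assms)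
  interpret N: group "cocycle_group B" by (rule group_cocycle_group)
  have nat_pow: "(0, z) [^]\<^bsub>cocycle_group B\<^esub> (k::nat) = (0, of_nat k * z)" for k
    by (induction k) (simp_all add: algebra_simps)
  show ?thesis
  proof (cases n rule: int_cases)
    case (nonneg k)
    then show ?thesis by (simp add: nat_pow int_pow_int)
  next
    case (neg k)
    then show ?thesis
      by (simp add: nat_pow N.int_pow_neg_int inv_cocycle_group del: of_nat_Suc) (simp add: algebra_simps)
  qed
qed

lemma pow_prod_cocycle_group:
  fixes B :: "'a::ab_group_add \<Rightarrow> 'a \<Rightarrow> 'c::ring_1"
  assumes "biadditive B"
  shows "pow_prod (cocycle_group B) l (\<lambda>i. (0, f i)) v = (0, \<Sum>i\<leftarrow>l. of_int (v i) * f i)"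
proof -
  interpret biadditive B by (rule assms)
  show ?thesis by (induction l) (simp_all add: int_pow_cocycle_group assms)
qed

definition list_form :: "('i \<times> 'i \<times> 'c) list \<Rightarrow> ('i \<Rightarrow> int) \<Rightarrow> ('i \<Rightarrow> int) \<Rightarrow> 'c::ring_1" where
  "list_form L a b = (\<Sum>(p, q, c)\<leftarrow>L. of_int (a p * b q) * c)"

lemma biadditive_list_form: "biadditive (list_form L)"
proof
  show "list_form L (a + a') b = list_form L a b + list_form L a' b" for a a' b
    by (induction L) (auto simp: list_form_def algebra_simps)
  show "list_form L a (b + b') = list_form L a b + list_form L a b'" for a b b'
    by (induction L) (auto simp: list_form_def algebra_simps)
qed

lemma list_form_basis_vec:
  "list_form L (basis_vec p) (basis_vec q) = (\<Sum>(p', q', c)\<leftarrow>L. if p' = p \<and> q' = q then c else 0)"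
  by (induction L) (auto simp: list_form_def basis_vec_def)

lemma of_int_fun_apply: "(of_int n :: 'a \<Rightarrow> 'b::ring_1) x = of_int n"
  by (cases n) (simp_all add: of_nat_fun)

lemma sum_list_scaled_basis_vec:
  "distinct l \<Longrightarrow> (\<Sum>i\<leftarrow>l. of_int (v i) * basis_vec i) = (\<lambda>j. if j \<in> set l then v j else 0)"
  by (induction l) (auto simp: fun_eq_iff basis_vec_def of_int_fun_apply)

interpretation vp3: group_presentation vp3_gens vp3_rels
  by unfold_locales (auto simp: vp3_rels_def vp3_gens_def)

interpretation VP3: group VP3
  unfolding VP3_def by (rule vp3.group_presented_group)

lemma vp3_gens_eq: "vp3_gens = {(1, 2), (1, 3), (2, 1), (2, 3), (3, 1), (3, 2)}"
  by (auto simp: vp3_gens_def)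

definition vp3_gen :: "nat \<times> nat \<Rightarrow> ((nat \<times> nat) \<times> bool) list set" where
  "vp3_gen p = vp3.word_class [(p, True)]"

lemma vp3_gen_closed: "p \<in> vp3_gens \<Longrightarrow> vp3_gen p \<in> carrier VP3"
  unfolding vp3_gen_def VP3_def by (rule vp3.word_class_closed) simp

lemma carrier_VP3_generate: "carrier VP3 = generate VP3 (vp3_gen ` vp3_gens)"
  using vp3.carrier_presented_group_generate by (simp add: VP3_def vp3_gen_def[abs_def])

lemma vp3_gen_relation:
  assumes "i \<in> {1, 2, 3}" "j \<in> {1, 2, 3}" "k \<in> {1, 2, 3}" "i \<noteq> j" "j \<noteq> k" "i \<noteq> k"
  shows "vp3_gen (k, i) \<otimes>\<^bsub>VP3\<^esub> vp3_gen (k, j) \<otimes>\<^bsub>VP3\<^esub> vp3_gen (i, j) =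
         vp3_gen (i, j) \<otimes>\<^bsub>VP3\<^esub> vp3_gen (k, j) \<otimes>\<^bsub>VP3\<^esub> vp3_gen (k, i)"
proof -
  have gens: "(k, i) \<in> vp3_gens" "(k, j) \<in> vp3_gens" "(i, j) \<in> vp3_gens"
    using assms by (auto simp: vp3_gens_def)
  have "([((k, i), True), ((k, j), True), ((i, j), True)],
         [((i, j), True), ((k, j), True), ((k, i), True)]) \<in> vp3_rels"
    unfolding vp3_rels_def using assms by blast
  then have "vp3.word_class [((k, i), True), ((k, j), True), ((i, j), True)] =
             vp3.word_class [((i, j), True), ((k, j), True), ((k, i), True)]"
    by (rule vp3.word_class_relator)
  then show ?thesis
    using gens by (simp add: vp3_gen_def VP3_def vp3.mult_word_class)
qed

definition basic_pairs :: "((nat \<times> nat) \<times> (nat \<times> nat)) list" where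
  "basic_pairs = [((1, 2), (2, 1)), ((1, 2), (1, 3)), ((1, 2), (3, 2)), ((2, 1), (3, 1)),
    ((2, 1), (2, 3)), ((1, 3), (3, 1)), ((1, 3), (2, 3)), ((3, 1), (3, 2)), ((2, 3), (3, 2))]"

definition basic_commutator :: "nat \<Rightarrow> ((nat \<times> nat) \<times> bool) list set" where
  "basic_commutator i = commutator VP3 (vp3_gen (fst (basic_pairs ! i))) (vp3_gen (snd (basic_pairs ! i)))"

lemma basic_pairs_gens: "i < 9 \<Longrightarrow> fst (basic_pairs ! i) \<in> vp3_gens \<and> snd (basic_pairs ! i) \<in> vp3_gens"
  by (auto simp: basic_pairs_def vp3_gens_eq less_Suc_eq numeral_eq_Suc)

lemma basic_commutator_closed: "i < 9 \<Longrightarrow> basic_commutator i \<in> carrier VP3"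
  using basic_pairs_gens vp3_gen_closed by (simp add: basic_commutator_def)

lemma basic_commutator_lower_central_2: "i < 9 \<Longrightarrow> basic_commutator i \<in> lower_central VP3 2"
  unfolding lower_central_2 basic_commutator_def
  using basic_pairs_gens vp3_gen_closed by (blast intro: generate.incl)

section \<open>A nilpotent model of \<open>VP\<^sub>3\<close>\<close>

text \<open>An entry \<open>(p, q, c)\<close> sets \<open>B(e\<^sub>p, e\<^sub>q) = c\<close>; pairs not listed get \<open>0\<close>. The listed pairs
  are the fifteen pairs \<open>p\<close> before \<open>q\<close> in the order \<open>12, 21, 13, 31, 23, 32\<close>, so the
  commutator of the images of \<open>\<lambda>\<^sub>p\<close> and \<open>\<lambda>\<^sub>q\<close> is \<open>(0, c)\<close>. The first nine entries
  send the basic commutators to the standard basis of \<open>\<int>\<^sup>9\<close>; the other six are forced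
  by the defining relations.\<close>

definition vp3_cocycle_table :: "((nat \<times> nat) \<times> (nat \<times> nat) \<times> (nat \<Rightarrow> int)) list" where
  "vp3_cocycle_table =
    [((1, 2), (2, 1), basis_vec 0), ((1, 2), (1, 3), basis_vec 1), ((1, 2), (3, 2), basis_vec 2),
     ((2, 1), (3, 1), basis_vec 3), ((2, 1), (2, 3), basis_vec 4), ((1, 3), (3, 1), basis_vec 5),
     ((1, 3), (2, 3), basis_vec 6), ((3, 1), (3, 2), basis_vec 7), ((2, 3), (3, 2), basis_vec 8),
     ((1, 2), (3, 1), basis_vec 7 - basis_vec 2), ((1, 2), (2, 3), - basis_vec 6 - basis_vec 1),
     ((2, 1), (1, 3), basis_vec 6 - basis_vec 4), ((2, 1), (3, 2), - basis_vec 3 - basis_vec 7),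
     ((1, 3), (3, 2), basis_vec 1 - basis_vec 2), ((3, 1), (2, 3), basis_vec 3 - basis_vec 4)]"

abbreviation vp3_model :: "((nat \<times> nat \<Rightarrow> int) \<times> (nat \<Rightarrow> int)) monoid" where
  "vp3_model \<equiv> cocycle_group (list_form vp3_cocycle_table)"

interpretation vp3_form: biadditive "list_form vp3_cocycle_table"
  by (rule biadditive_list_form)

interpretation vp3_model: group vp3_model
  by (rule vp3_form.group_cocycle_group)

lemma vp3_model_respects_relators:
  assumes "(l, r) \<in> vp3_rels"
  shows "eval_word vp3_model (\<lambda>p. (basis_vec p, 0)) l = eval_word vp3_model (\<lambda>p. (basis_vec p, 0)) r"
proof -
  obtain i j k where lr: "l = [((k, i), True), ((k, j), True), ((i, j), True)]"
      "r = [((i, j), True), ((k, j), True), ((k, i), True)]"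
    and ijk: "(i, j, k) \<in> {(1, 2, 3), (1, 3, 2), (2, 1, 3), (2, 3, 1), (3, 1, 2), (3, 2, 1)}"
    using assms unfolding vp3_rels_def by auto
  from ijk show ?thesis
    unfolding lr
    by (elim insertE emptyE; simp add: vp3_form.add_right list_form_basis_vec ac_simps;
        simp add: vp3_cocycle_table_def basis_vec_def fun_eq_iff)
qed

definition vp3_model_hom :: "((nat \<times> nat) \<times> bool) list set \<Rightarrow> (nat \<times> nat \<Rightarrow> int) \<times> (nat \<Rightarrow> int)" where
  "vp3_model_hom = vp3.lift_hom vp3_model (\<lambda>p. (basis_vec p, 0))"

interpretation vp3_model_hom: group_hom VP3 vp3_model vp3_model_hom
proof -
  have "vp3_model_hom \<in> hom VP3 vp3_model"
    unfolding vp3_model_hom_def VP3_def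
    by (rule vp3.lift_hom[OF vp3_model.is_group _ vp3_model_respects_relators]) auto
  then show "group_hom VP3 vp3_model vp3_model_hom"
    by (simp add: group_hom_def group_hom_axioms_def VP3.is_group vp3_model.is_group)
qed

lemma vp3_model_hom_gen: "p \<in> vp3_gens \<Longrightarrow> vp3_model_hom (vp3_gen p) = (basis_vec p, 0)"
  unfolding vp3_model_hom_def vp3_gen_def
  by (subst vp3.lift_hom_word_class[OF vp3_model.is_group _ vp3_model_respects_relators]) auto

lemma vp3_model_hom_basic_commutator: "i < 9 \<Longrightarrow> vp3_model_hom (basic_commutator i) = (0, basis_vec i)"
proof -
  assume "i < 9"
  then have "i \<in> {0, 1, 2, 3, 4, 5, 6, 7, 8}" by auto
  then show ?thesis
    by (elim insertE emptyE;
        simp add: basic_commutator_def basic_pairs_def vp3_gens_eq vp3_gen_closed vp3_model_hom_gen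
          vp3_model_hom.hom_commutator vp3_form.commutator_cocycle_group list_form_basis_vec;
        simp add: vp3_cocycle_table_def basis_vec_def fun_eq_iff)
qed

abbreviation VP3_quot :: "((nat \<times> nat) \<times> bool) list set set monoid" where
  "VP3_quot \<equiv> VP3 Mod lower_central VP3 3"

abbreviation proj :: "((nat \<times> nat) \<times> bool) list set \<Rightarrow> ((nat \<times> nat) \<times> bool) list set set" where
  "proj x \<equiv> lower_central VP3 3 #>\<^bsub>VP3\<^esub> x"

abbreviation gen_quot :: "nat \<times> nat \<Rightarrow> ((nat \<times> nat) \<times> bool) list set set" where
  "gen_quot p \<equiv> proj (vp3_gen p)"

interpretation VP3_quot: two_step_nilpotent VP3_quot
  by (rule VP3.two_step_nilpotent_quotient)

interpretation lower_central_3: normal "lower_central VP3 3" VP3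
  by (rule VP3.lower_central_normal)

interpretation proj: group_hom VP3 VP3_quot proj
  by (simp add: group_hom_def group_hom_axioms_def VP3.is_group VP3_quot.is_group
      lower_central_3.r_coset_hom_Mod)

lemma gen_quot_closed: "p \<in> vp3_gens \<Longrightarrow> gen_quot p \<in> carrier VP3_quot"
  using vp3_gen_closed by simp

definition basic_commutator_subgroup :: "((nat \<times> nat) \<times> bool) list set set set" where
  "basic_commutator_subgroup = generate VP3_quot ((\<lambda>i. proj (basic_commutator i)) ` {..<9})"

lemma basic_commutator_subgroup_is_subgroup: "subgroup basic_commutator_subgroup VP3_quot"
  unfolding basic_commutator_subgroup_def
  by (rule VP3_quot.generate_is_subgroup) (use basic_commutator_closed in auto)

lemma commutator_gen_quot_basic_mem:
  "i < 9 \<Longrightarrow> commutator VP3_quot (gen_quot (fst (basic_pairs ! i))) (gen_quot (snd (basic_pairs ! i)))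
     \<in> basic_commutator_subgroup"
  unfolding basic_commutator_subgroup_def
  using basic_pairs_gens vp3_gen_closed
  by (auto simp: basic_commutator_def proj.hom_commutator simp del: VP3_quot.commutator_closed
      intro!: generate.incl)

lemma commutator_gen_quot_swap_mem:
  assumes "commutator VP3_quot (gen_quot p) (gen_quot q) \<in> basic_commutator_subgroup"
    and "p \<in> vp3_gens" "q \<in> vp3_gens"
  shows "commutator VP3_quot (gen_quot q) (gen_quot p) \<in> basic_commutator_subgroup"
  using subgroup.m_inv_closed[OF basic_commutator_subgroup_is_subgroup assms(1)] assms(2,3)
  by (simp add: VP3_quot.inv_commutator gen_quot_closed)

text \<open>Modulo \<open>\<Gamma>\<^sub>3\<close> the defining relation \<open>\<lambda>\<^sub>k\<^sub>i \<lambda>\<^sub>k\<^sub>j \<lambda>\<^sub>i\<^sub>j = \<lambda>\<^sub>i\<^sub>j \<lambda>\<^sub>k\<^sub>j \<lambda>\<^sub>k\<^sub>i\<close> becomes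
  \<open>[\<lambda>\<^sub>k\<^sub>i, \<lambda>\<^sub>k\<^sub>j] [\<lambda>\<^sub>k\<^sub>i, \<lambda>\<^sub>i\<^sub>j] [\<lambda>\<^sub>k\<^sub>j, \<lambda>\<^sub>i\<^sub>j] = 1\<close>, which expresses the middle
  commutator through the other two.\<close>

lemma commutator_gen_quot_relation_mem:
  assumes ijk: "i \<in> {1, 2, 3}" "j \<in> {1, 2, 3}" "k \<in> {1, 2, 3}" "i \<noteq> j" "j \<noteq> k" "i \<noteq> k"
    and ki_kj: "commutator VP3_quot (gen_quot (k, i)) (gen_quot (k, j)) \<in> basic_commutator_subgroup"
    and kj_ij: "commutator VP3_quot (gen_quot (k, j)) (gen_quot (i, j)) \<in> basic_commutator_subgroup"
  shows "commutator VP3_quot (gen_quot (k, i)) (gen_quot (i, j)) \<in> basic_commutator_subgroup"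
proof -
  have gens: "(k, i) \<in> vp3_gens" "(k, j) \<in> vp3_gens" "(i, j) \<in> vp3_gens"
    using ijk by (auto simp: vp3_gens_def)
  have "gen_quot (k, i) \<otimes>\<^bsub>VP3_quot\<^esub> gen_quot (k, j) \<otimes>\<^bsub>VP3_quot\<^esub> gen_quot (i, j) =
        proj (vp3_gen (k, i) \<otimes>\<^bsub>VP3\<^esub> vp3_gen (k, j) \<otimes>\<^bsub>VP3\<^esub> vp3_gen (i, j))"
    using gens by (simp only: proj.hom_mult VP3.m_closed vp3_gen_closed)
  also have "\<dots> = proj (vp3_gen (i, j) \<otimes>\<^bsub>VP3\<^esub> vp3_gen (k, j) \<otimes>\<^bsub>VP3\<^esub> vp3_gen (k, i))"
    by (simp only: vp3_gen_relation[OF ijk])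
  also have "\<dots> = gen_quot (i, j) \<otimes>\<^bsub>VP3_quot\<^esub> gen_quot (k, j) \<otimes>\<^bsub>VP3_quot\<^esub> gen_quot (k, i)"
    using gens by (simp only: proj.hom_mult VP3.m_closed vp3_gen_closed)
  finally have "commutator VP3_quot (gen_quot (k, i)) (gen_quot (k, j)) \<otimes>\<^bsub>VP3_quot\<^esub>
      commutator VP3_quot (gen_quot (k, i)) (gen_quot (i, j)) \<otimes>\<^bsub>VP3_quot\<^esub>
      commutator VP3_quot (gen_quot (k, j)) (gen_quot (i, j)) = \<one>\<^bsub>VP3_quot\<^esub>"
    by (rule VP3_quot.commutator_product_eq_one[OF gen_quot_closed gen_quot_closed gen_quot_closed, OF gens])
  then show ?thesis
    using ki_kj kj_ij
    by (rule VP3_quot.mem_subgroup_of_product_eq_one[OF basic_commutator_subgroup_is_subgroup])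
       (simp add: gen_quot_closed gens)
qed

lemma commutator_gen_quot_mem:
  assumes "p \<in> vp3_gens" "q \<in> vp3_gens"
  shows "commutator VP3_quot (gen_quot p) (gen_quot q) \<in> basic_commutator_subgroup"
proof -
  define K where "K p q \<longleftrightarrow> commutator VP3_quot (gen_quot p) (gen_quot q) \<in> basic_commutator_subgroup"
    for p q
  have gens: "(1, 2) \<in> vp3_gens" "(1, 3) \<in> vp3_gens" "(2, 1) \<in> vp3_gens" "(2, 3) \<in> vp3_gens"
      "(3, 1) \<in> vp3_gens" "(3, 2) \<in> vp3_gens"
    by (simp_all add: vp3_gens_eq)
  note swap = commutator_gen_quot_swap_mem[folded K_def]
  note relation = commutator_gen_quot_relation_mem[folded K_def]
  have basic: "K (1, 2) (2, 1)" "K (1, 2) (1, 3)" "K (1, 2) (3, 2)" "K (2, 1) (3, 1)" "K (2, 1) (2, 3)"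
      "K (1, 3) (3, 1)" "K (1, 3) (2, 3)" "K (3, 1) (3, 2)" "K (2, 3) (3, 2)"
    using commutator_gen_quot_basic_mem[of 0] commutator_gen_quot_basic_mem[of 1]
      commutator_gen_quot_basic_mem[of 2] commutator_gen_quot_basic_mem[of 3]
      commutator_gen_quot_basic_mem[of 4] commutator_gen_quot_basic_mem[of 5]
      commutator_gen_quot_basic_mem[of 6] commutator_gen_quot_basic_mem[of 7]
      commutator_gen_quot_basic_mem[of 8]
    by (simp_all add: K_def basic_pairs_def)
  have derived: "K (3, 1) (1, 2)" "K (3, 2) (2, 1)" "K (2, 1) (1, 3)" "K (2, 3) (3, 1)" "K (1, 2) (2, 3)"
      "K (1, 3) (3, 2)"
    using relation[where k = 3 and i = 1 and j = 2, OF _ _ _ _ _ _ basic(8) swap[OF basic(3)]]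
      relation[where k = 3 and i = 2 and j = 1, OF _ _ _ _ _ _ swap[OF basic(8)] swap[OF basic(4)]]
      relation[where k = 2 and i = 1 and j = 3, OF _ _ _ _ _ _ basic(5) swap[OF basic(7)]]
      relation[where k = 2 and i = 3 and j = 1, OF _ _ _ _ _ _ swap[OF basic(5)] basic(4)]
      relation[where k = 1 and i = 2 and j = 3, OF _ _ _ _ _ _ basic(2) basic(7)]
      relation[where k = 1 and i = 3 and j = 2, OF _ _ _ _ _ _ swap[OF basic(2)] basic(3)]
    by (simp_all add: vp3_gens_eq)
  have "K p q \<or> K q p \<or> p = q"
    using assms unfolding vp3_gens_eq
    by (elim insertE emptyE) (simp_all only: basic derived prod.inject simp_thms)
  then show ?thesis
    using assms swap gen_quot_closed VP3_quot.commutator_self basic_commutator_subgroup_is_subgroup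
    by (metis K_def one_FactGroup subgroup.one_closed)
qed

lemma proj_lower_central_2_subset: "proj ` lower_central VP3 2 \<subseteq> basic_commutator_subgroup"
proof -
  have "carrier VP3_quot = proj ` generate VP3 (vp3_gen ` vp3_gens)"
    by (simp add: carrier_FactGroup flip: carrier_VP3_generate)
  also have "\<dots> = generate VP3_quot (gen_quot ` vp3_gens)"
    using vp3_gen_closed by (subst proj.generate_img[symmetric]) (auto simp: image_image)
  finally have "lower_central VP3_quot 2 \<subseteq> basic_commutator_subgroup"
    using commutator_gen_quot_mem gen_quot_closed
    by (intro VP3_quot.lower_central_2_subset[OF basic_commutator_subgroup_is_subgroup]) auto
  then show ?thesis
    using proj.lower_central_image by blast
qed

lemma basic_commutator_subgroup_subset_range:
  "basic_commutator_subgroup \<subseteq> range (\<lambda>z. proj (pow_prod VP3 [0..<9] basic_commutator z))"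
proof -
  have central: "central VP3_quot (proj (basic_commutator i))" if "i < 9" for i
    using basic_pairs_gens[OF that] vp3_gen_closed
    by (simp add: basic_commutator_def proj.hom_commutator VP3_quot.central_commutator)
  have "basic_commutator_subgroup \<subseteq> range (pow_prod VP3_quot [0..<9] (\<lambda>i. proj (basic_commutator i)))"
    unfolding basic_commutator_subgroup_def
    using VP3_quot.generate_central_subset_range_pow_prod[of "[0..<9]"] central
    by (simp add: atLeast0LessThan)
  also have "pow_prod VP3_quot [0..<9] (\<lambda>i. proj (basic_commutator i)) =
      (\<lambda>z. proj (pow_prod VP3 [0..<9] basic_commutator z))"
    by (rule ext, subst proj.hom_pow_prod) (simp_all add: basic_commutator_closed comp_def)
  finally show ?thesis .
qed

lemma lower_central_2_decompose:
  assumes "x \<in> lower_central VP3 2"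
  obtains h z where "h \<in> lower_central VP3 3" "x = h \<otimes>\<^bsub>VP3\<^esub> pow_prod VP3 [0..<9] basic_commutator z"
proof -
  obtain z where z: "proj x = proj (pow_prod VP3 [0..<9] basic_commutator z)"
    using proj_lower_central_2_subset basic_commutator_subgroup_subset_range assms by blast
  have "x \<in> carrier VP3" using assms VP3.lower_central_subset_carrier by blast
  then have "x \<in> lower_central VP3 3 #>\<^bsub>VP3\<^esub> pow_prod VP3 [0..<9] basic_commutator z"
    using VP3.rcos_self[OF _ VP3.lower_central_subgroup[of 3], of x] z by simp
  then show ?thesis
    using that unfolding r_coset_def by blast
qed

lemma vp3_model_hom_lower_central_2: "x \<in> lower_central VP3 2 \<Longrightarrow> fst (vp3_model_hom x) = 0"
  using vp3_model_hom.lower_central_image vp3_form.lower_central_2_cocycle_group by fastforce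

lemma vp3_model_hom_lower_central_3: "x \<in> lower_central VP3 3 \<Longrightarrow> vp3_model_hom x = (0, 0)"
  using vp3_model_hom.lower_central_image vp3_form.lower_central_3_cocycle_group by blast

lemma vp3_model_hom_pow_prod:
  "vp3_model_hom (pow_prod VP3 [0..<9] basic_commutator v) = (0, \<lambda>j. if j < 9 then v j else 0)"
proof -
  have "vp3_model_hom (pow_prod VP3 [0..<9] basic_commutator v) =
        pow_prod vp3_model [0..<9] (vp3_model_hom \<circ> basic_commutator) v"
    by (rule vp3_model_hom.hom_pow_prod) (simp add: basic_commutator_closed)
  also have "\<dots> = pow_prod vp3_model [0..<9] (\<lambda>i. (0, basis_vec i)) v"
    by (rule pow_prod_cong) (simp add: vp3_model_hom_basic_commutator)
  also have "\<dots> = (0, \<lambda>j. if j < 9 then v j else 0)"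
    by (simp add: pow_prod_cocycle_group[OF biadditive_list_form] sum_list_scaled_basis_vec)
  finally show ?thesis .
qed

definition coordinates :: "((nat \<times> nat) \<times> bool) list set \<Rightarrow> nat \<Rightarrow> int" where
  "coordinates x = restrict (snd (vp3_model_hom x)) {..<9}"

abbreviation Z9 :: "(nat \<Rightarrow> int) monoid" where
  "Z9 \<equiv> product_group {..<9} (\<lambda>_. integer_group)"

abbreviation lower_central_2_group :: "((nat \<times> nat) \<times> bool) list set monoid" where
  "lower_central_2_group \<equiv> VP3\<lparr>carrier := lower_central VP3 2\<rparr>"

interpretation coordinates: group_hom lower_central_2_group Z9 coordinates
proof -
  have "coordinates \<in> hom lower_central_2_group Z9"
  proof (rule homI)
    fix x y assume x: "x \<in> carrier lower_central_2_group" and y: "y \<in> carrier lower_central_2_group"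
    have "vp3_model_hom (x \<otimes>\<^bsub>VP3\<^esub> y) = vp3_model_hom x \<otimes>\<^bsub>vp3_model\<^esub> vp3_model_hom y"
      using x y VP3.lower_central_subset_carrier[THEN subsetD] by simp
    moreover have "fst (vp3_model_hom x) = 0" "fst (vp3_model_hom y) = 0"
      using x y vp3_model_hom_lower_central_2 by simp_all
    ultimately have "snd (vp3_model_hom (x \<otimes>\<^bsub>VP3\<^esub> y)) = snd (vp3_model_hom x) + snd (vp3_model_hom y)"
      by (cases "vp3_model_hom x", cases "vp3_model_hom y") simp
    then show "coordinates (x \<otimes>\<^bsub>lower_central_2_group\<^esub> y) = coordinates x \<otimes>\<^bsub>Z9\<^esub> coordinates y"
      by (simp add: coordinates_def fun_eq_iff)
  qed (simp add: coordinates_def)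
  moreover have "group Z9" by (rule product_group) simp
  ultimately show "group_hom lower_central_2_group Z9 coordinates"
    using VP3.subgroup_imp_group[OF VP3.lower_central_subgroup[of 2]]
    by (intro group_hom.intro group_hom_axioms.intro)
qed

lemma coordinates_surj: "coordinates ` carrier lower_central_2_group = carrier Z9"
proof
  show "coordinates ` carrier lower_central_2_group \<subseteq> carrier Z9"
    using coordinates.hom_closed by blast
  show "carrier Z9 \<subseteq> coordinates ` carrier lower_central_2_group"
  proof
    fix v assume v: "v \<in> carrier Z9"
    let ?x = "pow_prod VP3 [0..<9] basic_commutator v"
    have "?x \<in> lower_central VP3 2"
      using basic_commutator_lower_central_2
      by (intro VP3.pow_prod_mem_subgroup[OF VP3.lower_central_subgroup]) simp
    moreover have "coordinates ?x = restrict (\<lambda>j. if j < 9 then v j else 0) {..<9}"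
      by (simp add: coordinates_def vp3_model_hom_pow_prod)
    moreover have "\<dots> = v"
      using v by (simp add: restrict_def fun_eq_iff PiE_def extensional_def)
    ultimately show "v \<in> coordinates ` carrier lower_central_2_group"
      by (intro image_eqI[of _ _ ?x]) simp_all
  qed
qed

lemma kernel_coordinates: "kernel lower_central_2_group Z9 coordinates = lower_central VP3 3"
proof
  show "lower_central VP3 3 \<subseteq> kernel lower_central_2_group Z9 coordinates"
    using VP3.lower_central_Suc_subset[of 2, simplified] vp3_model_hom_lower_central_3
    by (auto simp: kernel_def coordinates_def)
next
  show "kernel lower_central_2_group Z9 coordinates \<subseteq> lower_central VP3 3"
  proof
    fix x assume "x \<in> kernel lower_central_2_group Z9 coordinates"
    then have x: "x \<in> lower_central VP3 2" and zero: "\<And>j. j < 9 \<Longrightarrow> snd (vp3_model_hom x) j = 0"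
      by (auto simp: kernel_def coordinates_def fun_eq_iff split: if_splits)
    obtain h z where h: "h \<in> lower_central VP3 3"
      and xhz: "x = h \<otimes>\<^bsub>VP3\<^esub> pow_prod VP3 [0..<9] basic_commutator z"
      using lower_central_2_decompose[OF x] .
    let ?y = "pow_prod VP3 [0..<9] basic_commutator z"
    have "?y \<in> carrier VP3" using basic_commutator_closed by (intro VP3.pow_prod_closed) simp
    then have "vp3_model_hom x = vp3_model_hom h \<otimes>\<^bsub>vp3_model\<^esub> vp3_model_hom ?y"
      using h VP3.lower_central_subset_carrier by (simp add: xhz subset_iff)
    also have "\<dots> = vp3_model_hom ?y"
      by (cases "vp3_model_hom ?y") (simp add: vp3_model_hom_lower_central_3[OF h])
    finally have "vp3_model_hom x = vp3_model_hom ?y" .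
    then have "?y = \<one>\<^bsub>VP3\<^esub>"
      using zero by (intro VP3.pow_prod_zero) (simp add: vp3_model_hom_pow_prod)
    then show "x \<in> lower_central VP3 3"
      using h VP3.lower_central_subset_carrier xhz by auto
  qed
qed

theorem lemma5p6:
  shows "(VP3\<lparr>carrier := lower_central VP3 2\<rparr>) Mod (lower_central VP3 3)
           \<cong> product_group {..<(9::nat)} (\<lambda>_. integer_group)"
  using coordinates.FactGroup_iso[OF coordinates_surj] by (simp only: kernel_coordinates)

end
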